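(* Let $(\mathbf a,\mathbf b)$ be a binary GCP of length $N$ of one of the following three kinds: (i) $N=10^\beta$ ($\beta\ge1$), obtained as $(\mathbf e_0,\mathbf f_0)=K_{10}$, $(\mathbf e_i,\mathbf f_i)=\mathrm{Turyn}(K_{10},(\mathbf e_{i-1},\mathbf f_{i-1}))$; set $Z=4N/10+1$; (ii) $N=26^\gamma$ ($\gamma\ge1$), obtained as $(\mathbf e_0,\mathbf f_0)=K_{26}$, $(\mathbf e_i,\mathbf f_i)=\mathrm{Turyn}(K_{26},(\mathbf e_{i-1},\mathbf f_{i-1}))$; set $Z=12N/26+1$; (iii) $N=10^\beta26^\gamma$ ($\beta\ge0$, $\gamma\ge1$), obtained as $(\mathbf e_0,\mathbf f_0)=K_{26}$, $(\mathbf e_i,\mathbf f_i)=\mathrm{Turyn}(\mathcal A_i,(\mathbf e_{i-1},\mathbf f_{i-1}))$ with each $\mathcal A_i\in\{K_{10},K_{26}\}$; set $Z=12N/26+1$. Let $(\mathbf c,\mathbf d)=(\overleftarrow{\mathbf b},-\overleftarrow{\mathbf a})$, $\mathbf e=(\mathbf a\|\mathbf c)$, $\mathbf f=(\mathbf b\|\mathbf d)$, and for $x_0,y_0,x_1,y_1\in\mathbb U_q$ let $\mathbf g=(x_0,e_0,\dots,e_{2N-1},y_0)$, $\mathbf h=(x_1,f_0,\dots,f_{2N-1},y_1)$. If $x_0-\overline{y_1}=0$, $x_1+\overline{y_0}=0$, $x_0=x_1$ and $\overline{y_0}=-\overline{y_1}$, then $(\mathbf g,\mathbf h)$ is a $(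2N+2,Z)$-CZCP.
   Context: $q\ge2$ is an integer and $\mathbb U_q=\{e^{2\pi\sqrt{-1}t/q}:0\le t<q\}$. $\overleftarrow{\mathbf a}$ denotes the reversal of $\mathbf a$; $\|$ denotes concatenation. A binary GCP of length $N$ is a pair of $\pm1$ sequences with $\rho_{\mathbf a}(\tau)+\rho_{\mathbf b}(\tau)=0$ for all $\tau\neq0$. Kernels (with $+=1$, $-=-1$; first row $\mathbf a$, second row $\mathbf b$): $K_{10}=(++-+-+--++,\;++-+++++--)$; $K_{26}=(++++-++--+-+-+--+-+++--+++,\;++++-++--+-+++++-+---++---)$. Turyn's method: for binary GCPs $\mathcal A=(\mathbf a,\mathbf b)$ of length $N$ and $\mathcal B=(\mathbf c,\mathbf d)$ of length $M$, $\mathrm{Turyn}(\mathcal A,\mathcal B)=(\mathbf e,\mathbf f)$ of length $MN$ with $\mathbf e=\mathbf c\otimes\frac{\mathbf a+\mathbf b}2-\overleftarrow{\mathbf d}\otimes\frac{\mathbf b-\mathbf a}2$, $\mathbf f=\mathbf d\otimes\frac{\mathbf a+\mathbf b}2+\overleftarrow{\mathbf c}\otimes\frac{\mathbf b-\mathbf a}2$, where $\mathbf u\otimes\mathbf v=(u_0\mathbf v,u_1\mathbf v,\dots)$. Aperiodic correlation: for complex sequences of length $N$, $\rho_{\mathbf a,\mathbf b}(\tau)=\sum_{k=0}^{N-1-\tau}a_k\overline{b_{k+\tau}}$ for $0\le\tau\le N-1$, $\rho_{\mathbf a,\mathbf b}(\tau)=\sum_{k=0}^{N-1+\tau}a_{k-\tau}\overline{b_k}$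 for $-(N-1)\le\tau\le-1$, $0$ otherwise; $\rho_{\mathbf a}=\rho_{\mathbf a,\mathbf a}$. CZCP: with $\mathcal T_1=\{1,\dots,Z\}$, $\mathcal T_2=\{N-Z,\dots,N-1\}$, a pair of length-$N$ sequences is an $(N,Z)$-CZCP if $\rho_{\mathbf a}(\tau)+\rho_{\mathbf b}(\tau)=0$ for all $|\tau|\in\mathcal T_1\cup\mathcal T_2$ and $\rho_{\mathbf a,\mathbf b}(\tau)+\rho_{\mathbf b,\mathbf a}(\tau)=0$ for all $|\tau|\in\mathcal T_2$. *)

theory Defs
  imports Complex_Main
begin

text \<open>Binary sequences are int lists with entries +1/-1; pairs are (first row, second row).\<close>

definition K10 :: "int list \<times> int list" where
  "K10 = ([1,1,-1,1,-1,1,-1,-1,1,1], [1,1,-1,1,1,1,1,1,-1,-1])"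

definition K26 :: "int list \<times> int list" where
  "K26 = ([1,1,1,1,-1,1,1,-1,-1,1,-1,1,-1,1,-1,-1,1,-1,1,1,1,-1,-1,1,1,1],
          [1,1,1,1,-1,1,1,-1,-1,1,-1,1,1,1,1,1,-1,1,-1,-1,-1,1,1,-1,-1,-1])"

definition kron :: "int list \<Rightarrow> int list \<Rightarrow> int list" where
  "kron u v = concat (map (\<lambda>x. map (\<lambda>y. x * y) v) u)"

definition vadd :: "int list \<Rightarrow> int list \<Rightarrow> int list" where
  "vadd u v = map2 (+) u v"

definition vsub :: "int list \<Rightarrow> int list \<Rightarrow> int list" where
  "vsub u v = map2 (-) u v"

definition vhalf :: "int list \<Rightarrow> int list" where
  "vhalf u = map (\<lambda>x. x div 2) u"

text \<open>Turyn(A,B) with A = (a,b) of length N and B = (c,d) of length M.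
  For +/-1 sequences a+b and b-a have even entries, so div 2 is exact.\<close>
definition turyn :: "int list \<times> int list \<Rightarrow> int list \<times> int list \<Rightarrow> int list \<times> int list" where
  "turyn A B = (let (a, b) = A; (c, d) = B;
                    s = vhalf (vadd a b); t = vhalf (vsub b a) in
     (vsub (kron c s) (kron (rev d) t), vadd (kron d s) (kron (rev c) t)))"

definition turyn_iter :: "int list \<times> int list \<Rightarrow> (int list \<times> int list) list \<Rightarrow> int list \<times> int list" where
  "turyn_iter P0 As = foldl (\<lambda>P A. turyn A P) P0 As"

definition unit_roots :: "nat \<Rightarrow> complex set" where
  "unit_roots q = {cis (2 * pi * real t / real q) | t. t < q}"

definition acorr :: "complex list \<Rightarrow> complex list \<Rightarrow> int \<Rightarrow> complex" where
  "acorr a b \<tau> = (let N = int (length a) in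
     if 0 \<le> \<tau> \<and> \<tau> \<le> N - 1 then
       (\<Sum>k = 0..nat (N - 1 - \<tau>). a ! k * cnj (b ! (k + nat \<tau>)))
     else if -(N - 1) \<le> \<tau> \<and> \<tau> \<le> -1 then
       (\<Sum>k = 0..nat (N - 1 + \<tau>). a ! (k + nat (-\<tau>)) * cnj (b ! k))
     else 0)"

definition czcp :: "complex list \<Rightarrow> complex list \<Rightarrow> nat \<Rightarrow> nat \<Rightarrow> bool" where
  "czcp a b N Z \<longleftrightarrow> length a = N \<and> length b = N \<and>
     (let T1 = {1 .. int Z}; T2 = {int N - int Z .. int N - 1} in
       (\<forall>\<tau>::int. \<bar>\<tau>\<bar> \<in> T1 \<union> T2 \<longrightarrow> acorr a a \<tau> + acorr b b \<tau> = 0) \<and>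
       (\<forall>\<tau>::int. \<bar>\<tau>\<bar> \<in> T2 \<longrightarrow> acorr a b \<tau> + acorr b a \<tau> = 0))"

end

theory Submission
  imports Defs "HOL-Computational_Algebra.Polynomial"
begin

text \<open>
  Identify an integer sequence a of length N with the polynomial a(x). The coefficient of
  x^(N-1-t) in a(x) * rev a(x) is the aperiodic autocorrelation of a at lag t, so (a, b) is a
  Golay pair iff a(x) rev a(x) + b(x) rev b(x) = 2N x^(N-1). Turyn's construction factors this
  identity for the new pair into the identities for the kernel and for the old pair, so every
  constructed pair is a Golay pair.

  The kernels K10 and K26 agree in their first 4 (resp. 12) entries and are opposite in their
  last 4 (resp. 12) entries, and every Turyn step multiplies the length of this pattern by the
  kernel length; hence a and b agree in their first Z - 1 entries. For the padded sequences
  g, h the correlation at a lag t <= 2N is a correlation of the Golay pair (e, f), which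
  vanishes (for the cross-correlations near the end, because a and b agree on their heads),
  plus boundary terms that cancel by the conditions on x0, y0, x1, y1 and the head agreement.
\<close>

definition gcp :: "int list \<Rightarrow> int list \<Rightarrow> bool" where
  "gcp a b \<longleftrightarrow> length a = length b \<and>
     Poly a * Poly (rev a) + Poly b * Poly (rev b) = monom (2 * int (length a)) (length a - 1)"

lemma kron_Nil [simp]: "kron [] s = []"
  by (simp add: kron_def)

lemma kron_Cons [simp]: "kron (x # c) s = map ((*) x) s @ kron c s"
  by (simp add: kron_def)

lemma length_kron [simp]: "length (kron c s) = length c * length s"
  by (induct c) auto

lemma rev_kron: "rev (kron c s) = kron (rev c) (rev s)"
  by (induct c) (simp_all add: kron_def rev_map)

lemma nth_kron:
  assumes "m < length c" "j < length s"
  shows "kron c s ! (m * length s + j) = c ! m * s ! j"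
  using assms
proof (induct c arbitrary: m)
  case (Cons x c)
  then show ?case
    by (cases m) (simp_all add: nth_append add.assoc)
qed simp

lemma Poly_kron: "Poly (kron c s) = pcompose (Poly c) (monom 1 (length s)) * Poly s"
proof -
  have "Poly (map ((*) x) s) = smult x (Poly s)" for x
    by (induct s) simp_all
  then show ?thesis
    by (induct c) (simp_all add: Poly_append pcompose_pCons algebra_simps)
qed

lemma pcompose_monom_monom_1: "pcompose (monom (c::int) k) (monom 1 n) = monom c (k * n)"
  by (induct k) (simp_all add: monom_0 monom_Suc pcompose_pCons mult_monom add.commute)

lemma length_vadd [simp]: "length (vadd u v) = min (length u) (length v)"
  and length_vsub [simp]: "length (vsub u v) = min (length u) (length v)"
  and length_vhalf [simp]: "length (vhalf u) = length u"
  by (simp_all add: vadd_def vsub_def vhalf_def)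

lemma nth_vadd: "i < length u \<Longrightarrow> i < length v \<Longrightarrow> vadd u v ! i = u ! i + v ! i"
  and nth_vsub: "i < length u \<Longrightarrow> i < length v \<Longrightarrow> vsub u v ! i = u ! i - v ! i"
  by (simp_all add: vadd_def vsub_def)

lemma Poly_vadd: "length u = length v \<Longrightarrow> Poly (vadd u v) = Poly u + Poly v"
  unfolding vadd_def by (induct u v rule: list_induct2) simp_all

lemma Poly_vsub: "length u = length v \<Longrightarrow> Poly (vsub u v) = Poly u - Poly v"
  unfolding vsub_def by (induct u v rule: list_induct2) simp_all

lemma rev_vadd: "length u = length v \<Longrightarrow> rev (vadd u v) = vadd (rev u) (rev v)"
  and rev_vsub: "length u = length v \<Longrightarrow> rev (vsub u v) = vsub (rev u) (rev v)"
  and rev_vhalf: "rev (vhalf u) = vhalf (rev u)"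
  by (simp_all add: vadd_def vsub_def vhalf_def zip_rev rev_map)

lemma smult_2_Poly_vhalf: "\<forall>x \<in> set w. even x \<Longrightarrow> smult 2 (Poly (vhalf w)) = Poly w"
  unfolding vhalf_def by (induct w) simp_all

lemma even_vsub_if_even_vadd:
  assumes "length a = length b" "\<forall>x \<in> set (vadd a b). even x"
  shows "\<forall>x \<in> set (vsub b a). even x"
proof -
  have "even (b ! i - a ! i)" if "i < length a" for i
  proof -
    have "even (vadd a b ! i)"
      using assms nth_mem[of i "vadd a b"] that by auto
    then show ?thesis
      using assms(1) that by (simp add: nth_vadd)
  qed
  then show ?thesis
    using assms(1) by (auto simp: in_set_conv_nth nth_vsub)
qed

lemma gcp_half_sum_half_diff:
  assumes gcp: "gcp a b" and even: "\<forall>x \<in> set (vadd a b). even x"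
  defines "s \<equiv> vhalf (vadd a b)" and "t \<equiv> vhalf (vsub b a)"
  shows "Poly s * Poly (rev s) + Poly t * Poly (rev t) = monom (int (length a)) (length a - 1)"
proof -
  have len: "length b = length a"
    using gcp by (simp add: gcp_def)
  have even': "\<forall>x \<in> set (vsub b a). even x"
    using even_vsub_if_even_vadd[OF len[symmetric] even] .
  have S: "smult 2 (Poly s) = Poly a + Poly b"
    using smult_2_Poly_vhalf[OF even] len by (simp add: s_def Poly_vadd)
  have T: "smult 2 (Poly t) = Poly b - Poly a"
    using smult_2_Poly_vhalf[OF even'] len by (simp add: t_def Poly_vsub)
  have "smult 2 (Poly (rev s)) = Poly (rev (vadd a b))"
    using smult_2_Poly_vhalf[of "rev (vadd a b)"] even by (simp add: s_def rev_vhalf)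
  also have "\<dots> = Poly (rev a) + Poly (rev b)"
    using len by (simp add: rev_vadd Poly_vadd)
  finally have Sr: "smult 2 (Poly (rev s)) = Poly (rev a) + Poly (rev b)" .
  have "smult 2 (Poly (rev t)) = Poly (rev (vsub b a))"
    using smult_2_Poly_vhalf[of "rev (vsub b a)"] even' by (simp add: t_def rev_vhalf)
  also have "\<dots> = Poly (rev b) - Poly (rev a)"
    using len by (simp add: rev_vsub Poly_vsub)
  finally have Tr: "smult 2 (Poly (rev t)) = Poly (rev b) - Poly (rev a)" .
  have "smult 4 (Poly s * Poly (rev s) + Poly t * Poly (rev t))
      = smult 2 (Poly s) * smult 2 (Poly (rev s)) + smult 2 (Poly t) * smult 2 (Poly (rev t))"
    by (simp add: smult_add_right)
  also have "\<dots> = smult 2 (Poly a * Poly (rev a) + Poly b * Poly (rev b))"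
    unfolding S T Sr Tr by (simp only: flip: numeral_mult_conv_smult) algebra
  also have "\<dots> = smult 4 (monom (int (length a)) (length a - 1))"
    using gcp by (simp add: gcp_def smult_monom)
  finally show ?thesis
    by (rule smult_cancel[rotated]) simp
qed

lemma fst_turyn: "fst (turyn (ka, kb) (c, d)) =
    vsub (kron c (vhalf (vadd ka kb))) (kron (rev d) (vhalf (vsub kb ka)))"
  and snd_turyn: "snd (turyn (ka, kb) (c, d)) =
    vadd (kron d (vhalf (vadd ka kb))) (kron (rev c) (vhalf (vsub kb ka)))"
  by (simp_all add: turyn_def Let_def)

lemma length_turyn:
  assumes "length kb = length ka" "length d = length c"
  shows "length (fst (turyn (ka, kb) (c, d))) = length c * length ka"
    and "length (snd (turyn (ka, kb) (c, d))) = length c * length ka"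
  using assms by (simp_all add: fst_turyn snd_turyn)

lemma gcp_turyn:
  assumes kernel: "gcp ka kb" "\<forall>x \<in> set (vadd ka kb). even x" and cd: "gcp c d"
  shows "gcp (fst (turyn (ka, kb) (c, d))) (snd (turyn (ka, kb) (c, d)))"
proof -
  define n M where "n = length ka" and "M = length c"
  define s t where "s = vhalf (vadd ka kb)" and "t = vhalf (vsub kb ka)"
  define e f where "e = fst (turyn (ka, kb) (c, d))" and "f = snd (turyn (ka, kb) (c, d))"
  have len: "length kb = n" "length d = M" "length s = n" "length t = n"
    using kernel cd by (simp_all add: gcp_def n_def M_def s_def t_def)
  have len_ef: "length e = M * n" "length f = M * n"
    using length_turyn len by (simp_all add: e_def f_def n_def M_def)
  define X where "X = (monom 1 n :: int poly)"
  define C D Cr Dr where "C = pcompose (Poly c) X" and "D = pcompose (Poly d) X"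
    and "Cr = pcompose (Poly (rev c)) X" and "Dr = pcompose (Poly (rev d)) X"
  have ef: "Poly e = C * Poly s - Dr * Poly t" "Poly f = D * Poly s + Cr * Poly t"
    "Poly (rev e) = Cr * Poly (rev s) - D * Poly (rev t)"
    "Poly (rev f) = Dr * Poly (rev s) + C * Poly (rev t)"
    using len by (simp_all add: e_def f_def C_def D_def Cr_def Dr_def X_def M_def fst_turyn snd_turyn
      flip: s_def t_def add: Poly_vadd Poly_vsub rev_vadd rev_vsub rev_kron Poly_kron)
  have "Poly e * Poly (rev e) + Poly f * Poly (rev f)
      = (C * Cr + D * Dr) * (Poly s * Poly (rev s) + Poly t * Poly (rev t))"
    unfolding ef by algebra
  also have "C * Cr + D * Dr = pcompose (Poly c * Poly (rev c) + Poly d * Poly (rev d)) X"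
    by (simp add: C_def D_def Cr_def Dr_def pcompose_add pcompose_mult)
  also have "\<dots> = monom (2 * int M) ((M - 1) * n)"
    using cd by (simp add: gcp_def X_def M_def pcompose_monom_monom_1)
  also have "Poly s * Poly (rev s) + Poly t * Poly (rev t) = monom (int n) (n - 1)"
    using gcp_half_sum_half_diff[OF kernel] by (simp add: s_def t_def n_def)
  also have "monom (2 * int M) ((M - 1) * n) * monom (int n) (n - 1)
      = monom (2 * int (M * n)) (M * n - 1)"
  proof (cases "M = 0 \<or> n = 0")
    case False
    then have "(M - 1) * n + (n - 1) = M * n - 1"
      by (simp add: diff_mult_distrib)
    then show ?thesis
      by (simp add: mult_monom)
  qed (auto simp: mult_monom)
  finally show ?thesis
    using len_ef by (simp add: gcp_def e_def f_def)
qed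

definition heads_agree_tails_oppose :: "nat \<Rightarrow> int list \<Rightarrow> int list \<Rightarrow> bool" where
  "heads_agree_tails_oppose L a b \<longleftrightarrow> length a = length b \<and> L \<le> length a \<and>
     (\<forall>m < L. a ! m = b ! m \<and> a ! (length a - 1 - m) = - b ! (length a - 1 - m))"

lemma mult_add_less_mult:
  fixes m M j n :: nat
  assumes "m < M" "j < n"
  shows "m * n + j < M * n"
proof -
  have "m * n + j < Suc m * n"
    using assms(2) by simp
  also have "\<dots> \<le> M * n"
    using assms(1) by (intro mult_le_mono1) simp
  finally show ?thesis .
qed

lemma nth_turyn:
  assumes "length kb = length ka" "length d = length c" "m < length c" "j < length ka"
  defines "n \<equiv> length ka" and "M \<equiv> length c"
    and "s \<equiv> vhalf (vadd ka kb)" and "t \<equiv> vhalf (vsub kb ka)"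
  shows "fst (turyn (ka, kb) (c, d)) ! (m * n + j) = c ! m * s ! j - d ! (M - 1 - m) * t ! j"
    and "snd (turyn (ka, kb) (c, d)) ! (m * n + j) = d ! m * s ! j + c ! (M - 1 - m) * t ! j"
proof -
  have "m * n + j < M * n"
    using mult_add_less_mult assms(3,4) by (simp add: n_def M_def)
  then show "fst (turyn (ka, kb) (c, d)) ! (m * n + j) = c ! m * s ! j - d ! (M - 1 - m) * t ! j"
    and "snd (turyn (ka, kb) (c, d)) ! (m * n + j) = d ! m * s ! j + c ! (M - 1 - m) * t ! j"
    using assms nth_kron[of m c j s] nth_kron[of m "rev d" j t] nth_kron[of m d j s]
      nth_kron[of m "rev c" j t]
    by (simp_all add: fst_turyn snd_turyn nth_vadd nth_vsub rev_nth)
qed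

lemma mirror_index_mult_add:
  fixes m M j n :: nat
  assumes "m < M" "j < n"
  shows "M * n - 1 - (m * n + j) = (M - 1 - m) * n + (n - 1 - j)"
proof -
  obtain r u where "M = m + Suc r" "n = j + Suc u"
    using assms by (metis less_imp_Suc_add add_Suc_right)
  then show ?thesis
    by (simp add: algebra_simps)
qed

text \<open>Block m of the Turyn pair is (c!m s - d!(M-1-m) t, d!m s + c!(M-1-m) t), so agreement of
  (c, d) at position m and opposition at position M-1-m make the blocks m and M-1-m of the
  new pair agree resp. oppose.\<close>

lemma heads_agree_tails_oppose_turyn:
  assumes "length kb = length ka" and cd: "heads_agree_tails_oppose L c d"
  shows "heads_agree_tails_oppose (L * length ka)
           (fst (turyn (ka, kb) (c, d))) (snd (turyn (ka, kb) (c, d)))"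
proof -
  define n M where "n = length ka" and "M = length c"
  define s t where "s = vhalf (vadd ka kb)" and "t = vhalf (vsub kb ka)"
  define e f where "e = fst (turyn (ka, kb) (c, d))" and "f = snd (turyn (ka, kb) (c, d))"
  have len: "length d = M" "L \<le> M"
    using cd by (simp_all add: heads_agree_tails_oppose_def M_def)
  have len_ef: "length e = M * n" "length f = M * n"
    using length_turyn assms(1) len by (simp_all add: e_def f_def n_def M_def)
  have "e ! i = f ! i \<and> e ! (M * n - 1 - i) = - f ! (M * n - 1 - i)" if "i < L * n" for i
  proof -
    define m j where "m = i div n" and "j = i mod n"
    have i: "i = m * n + j"
      by (simp add: m_def j_def)
    have "0 < n"
      using that by (metis gr0I mult_0_right not_less_zero)
    then have m: "m < L" and j: "j < n"
      using that by (simp_all add: m_def j_def less_mult_imp_div_less)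
    have mM: "m < M" "M - 1 - m < M" "M - 1 - (M - 1 - m) = m"
      using m len by auto
    have "c ! m = d ! m" "c ! (M - 1 - m) = - d ! (M - 1 - m)"
      using cd m unfolding heads_agree_tails_oppose_def M_def by blast+
    moreover have "M * n - 1 - i = (M - 1 - m) * n + (n - 1 - j)"
      unfolding i using mM(1) j by (rule mirror_index_mult_add)
    moreover note entry = nth_turyn[OF assms(1) len(1)[unfolded M_def],
        folded n_def M_def s_def t_def e_def f_def]
    have "n - 1 - j < n"
      using j by simp
    ultimately show ?thesis
      using entry[OF mM(1) j] entry[OF mM(2) \<open>n - 1 - j < n\<close>] mM(3) unfolding i by simp
  qed
  then show ?thesis
    using len len_ef by (simp add: heads_agree_tails_oppose_def e_def f_def n_def)
qed

lemma turyn_iter_snoc: "turyn_iter P (As @ [A]) = turyn A (turyn_iter P As)"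
  by (simp add: turyn_iter_def)

lemma gcp_turyn_iter:
  assumes "\<forall>A \<in> set As. gcp (fst A) (snd A) \<and> (\<forall>x \<in> set (vadd (fst A) (snd A)). even x)"
    and "gcp (fst P) (snd P)"
  shows "gcp (fst (turyn_iter P As)) (snd (turyn_iter P As))"
  using assms
proof (induct As rule: rev_induct)
  case (snoc A As)
  then show ?case
    using gcp_turyn[of "fst A" "snd A" "fst (turyn_iter P As)" "snd (turyn_iter P As)"]
    by (simp add: turyn_iter_snoc)
qed (simp add: turyn_iter_def)

lemma heads_agree_tails_oppose_turyn_iter:
  assumes "\<forall>A \<in> set As. length (snd A) = length (fst A)"
    and "heads_agree_tails_oppose L (fst P) (snd P)"
  shows "heads_agree_tails_oppose (L * (\<Prod>A \<leftarrow> As. length (fst A)))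
           (fst (turyn_iter P As)) (snd (turyn_iter P As))"
  using assms
proof (induct As rule: rev_induct)
  case (snoc A As)
  then show ?case
    using heads_agree_tails_oppose_turyn[of "snd A" "fst A"
        "L * (\<Prod>A \<leftarrow> As. length (fst A))" "fst (turyn_iter P As)" "snd (turyn_iter P As)"]
    by (simp add: turyn_iter_snoc mult.assoc)
qed (simp add: turyn_iter_def)

lemma length_turyn_iter:
  assumes "\<forall>A \<in> set As. length (snd A) = length (fst A)" and "length (snd P) = length (fst P)"
  shows "length (fst (turyn_iter P As)) = length (fst P) * (\<Prod>A \<leftarrow> As. length (fst A))
       \<and> length (snd (turyn_iter P As)) = length (fst P) * (\<Prod>A \<leftarrow> As. length (fst A))"
  using assms
proof (induct As rule: rev_induct)
  case (snoc A As)
  then show ?case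
    using length_turyn[of "snd A" "fst A" "snd (turyn_iter P As)" "fst (turyn_iter P As)"]
    by (simp add: turyn_iter_snoc mult.assoc)
qed (simp add: turyn_iter_def)

lemma gcp_K10: "gcp (fst K10) (snd K10)"
  and gcp_K26: "gcp (fst K26) (snd K26)"
  by (simp_all add: gcp_def K10_def K26_def monom_altdef)

lemma heads_agree_tails_oppose_K10: "heads_agree_tails_oppose 4 (fst K10) (snd K10)"
  and heads_agree_tails_oppose_K26: "heads_agree_tails_oppose 12 (fst K26) (snd K26)"
  by (simp_all add: heads_agree_tails_oppose_def K10_def K26_def eval_nat_numeral All_less_Suc)

lemma even_vadd_K10_K26: "K \<in> {K10, K26} \<Longrightarrow> \<forall>x \<in> set (vadd (fst K) (snd K)). even x"
  by (auto simp: K10_def K26_def vadd_def)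

lemma gcp_heads_agree_turyn_iter_K10_K26:
  assumes As: "set As \<subseteq> {K10, K26}" and K0: "K0 \<in> {K10, K26}"
    and pattern: "heads_agree_tails_oppose L (fst K0) (snd K0)" and L: "L < length (fst K0)"
    and ab: "(a, b) = turyn_iter K0 As" and Z: "Z = L * length a div length (fst K0) + 1"
  shows "gcp a b \<and> Z \<le> length a \<and> (\<forall>m < Z - 1. a ! m = b ! m)"
proof -
  define n0 P where "n0 = length (fst K0)" and "P = (\<Prod>A \<leftarrow> As. length (fst A))"
  have a: "a = fst (turyn_iter K0 As)" and b: "b = snd (turyn_iter K0 As)"
    by (simp_all flip: ab)
  have kernels: "\<forall>A \<in> set As. gcp (fst A) (snd A) \<and> (\<forall>x \<in> set (vadd (fst A) (snd A)). even x)"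
    using As gcp_K10 gcp_K26 even_vadd_K10_K26 by auto
  then have rows: "\<forall>A \<in> set As. length (snd A) = length (fst A)"
    by (simp add: gcp_def)
  have "\<forall>A \<in> set As. length (fst A) \<noteq> 0"
    using As by (auto simp: K10_def K26_def)
  then have "P \<noteq> 0"
    unfolding P_def prod_list_zero_iff by auto
  have "gcp (fst K0) (snd K0)"
    using K0 gcp_K10 gcp_K26 by auto
  then have "gcp a b" and len: "length a = n0 * P"
    using gcp_turyn_iter[OF kernels] length_turyn_iter[OF rows, of K0]
    by (simp_all add: a b n0_def P_def gcp_def)
  moreover have "heads_agree_tails_oppose (L * P) a b"
    using heads_agree_tails_oppose_turyn_iter[OF rows pattern] by (simp add: a b P_def)
  moreover have "L * P < length a"
    using L len \<open>P \<noteq> 0\<close> by (simp add: n0_def)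
  moreover have "L * length a div n0 = L * P"
    using L len by (simp add: n0_def[symmetric] mult.left_commute)
  ultimately show ?thesis
    using L Z by (auto simp: heads_agree_tails_oppose_def n0_def)
qed

definition icorr :: "int list \<Rightarrow> int list \<Rightarrow> nat \<Rightarrow> int" where
  "icorr u v t = (\<Sum>k < length u - t. u ! k * v ! (k + t))"

lemma coeff_Poly_mult_Poly_rev:
  assumes "t < length u"
  shows "coeff (Poly u * Poly (rev u)) (length u - 1 - t) = icorr u u t"
proof -
  have "{..length u - 1 - t} = {..<length u - t}"
    using assms by auto
  then show ?thesis
    unfolding coeff_mult coeff_Poly_eq icorr_def
  proof (intro sum.cong)
    fix i assume "i \<in> {..<length u - t}"
    then have "i < length u" "length u - 1 - t - i < length u"
      and "length u - Suc (length u - 1 - t - i) = i + t"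
      by auto
    then show "nth_default 0 u i * nth_default 0 (rev u) (length u - 1 - t - i) = u ! i * u ! (i + t)"
      by (simp add: nth_default_def rev_nth)
  qed
qed

lemma gcp_icorr:
  assumes "gcp u v" "1 \<le> t"
  shows "icorr u u t + icorr v v t = 0"
proof (cases "t < length u")
  case True
  have "length v = length u" "length u - 1 - t \<noteq> length u - 1"
    using assms True by (auto simp: gcp_def)
  then have "coeff (Poly u * Poly (rev u) + Poly v * Poly (rev v)) (length u - 1 - t) = 0"
    using assms by (simp add: gcp_def coeff_monom)
  then show ?thesis
    using coeff_Poly_mult_Poly_rev[OF True] coeff_Poly_mult_Poly_rev[of t v] True
      \<open>length v = length u\<close> by simp
qed (use assms in \<open>simp add: icorr_def gcp_def\<close>)

lemma gcp_append_rev: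
  assumes "gcp a b"
  shows "gcp (a @ rev b) (b @ map uminus (rev a))"
proof -
  define N where "N = length a"
  define X where "X = (monom 1 N :: int poly)"
  have len: "length b = N"
    using assms by (simp add: gcp_def N_def)
  have "Poly (map uminus w) = - Poly w" for w :: "int list"
    by (induct w) simp_all
  then have parts: "Poly (a @ rev b) = Poly a + X * Poly (rev b)"
    "Poly (rev (a @ rev b)) = Poly b + X * Poly (rev a)"
    "Poly (b @ map uminus (rev a)) = Poly b - X * Poly (rev a)"
    "Poly (rev (b @ map uminus (rev a))) = - Poly a + X * Poly (rev b)"
    using len by (simp_all add: Poly_append X_def N_def rev_map)
  have "Poly (a @ rev b) * Poly (rev (a @ rev b))
        + Poly (b @ map uminus (rev a)) * Poly (rev (b @ map uminus (rev a)))
      = (X + X) * (Poly a * Poly (rev a) + Poly b * Poly (rev b))"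
    unfolding parts by algebra
  also have "\<dots> = monom 2 N * monom (2 * int N) (N - 1)"
    using assms by (simp add: gcp_def X_def N_def add_monom)
  also have "\<dots> = monom (2 * int (N + N)) (N + N - 1)"
  proof (cases "N = 0")
    case False
    then have "N + (N - 1) = N + N - 1"
      by simp
    then show ?thesis
      by (simp add: mult_monom)
  qed simp
  finally show ?thesis
    using len by (simp add: gcp_def N_def)
qed

lemma acorr_neg:
  assumes "length g = length h" "1 \<le> t" "t < length g"
  shows "acorr g h (- int t) = cnj (acorr h g (int t))"
  using assms by (simp add: acorr_def Let_def algebra_simps)

lemma czcp_by_positive_lags:
  assumes len: "length g = L" "length h = L" and "Z < L"
    and auto: "\<And>t. 1 \<le> t \<Longrightarrow> t < L \<Longrightarrow> t \<le> Z \<or> L - Z \<le> t \<Longrightarrow>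
                  acorr g g (int t) + acorr h h (int t) = 0"
    and cross: "\<And>t. L - Z \<le> t \<Longrightarrow> t < L \<Longrightarrow> acorr g h (int t) + acorr h g (int t) = 0"
  shows "czcp g h L Z"
proof -
  have "acorr g g \<tau> + acorr h h \<tau> = 0"
    if "\<bar>\<tau>\<bar> \<in> {1 .. int Z} \<union> {int L - int Z .. int L - 1}" for \<tau>
  proof -
    define t where "t = nat \<bar>\<tau>\<bar>"
    have t: "1 \<le> t" "t < L" "t \<le> Z \<or> L - Z \<le> t"
      using that \<open>Z < L\<close> by (auto simp: t_def)
    have "\<tau> = int t \<or> \<tau> = - int t"
      by (auto simp: t_def)
    then show ?thesis
      using auto[OF t] acorr_neg[of g g t] acorr_neg[of h h t] len t
      by (auto simp flip: complex_cnj_add)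
  qed
  moreover have "acorr g h \<tau> + acorr h g \<tau> = 0"
    if "\<bar>\<tau>\<bar> \<in> {int L - int Z .. int L - 1}" for \<tau>
  proof -
    define t where "t = nat \<bar>\<tau>\<bar>"
    have t: "1 \<le> t" "L - Z \<le> t" "t < L"
      using that \<open>Z < L\<close> by (auto simp: t_def)
    have "\<tau> = int t \<or> \<tau> = - int t"
      by (auto simp: t_def)
    then show ?thesis
      using cross[OF t(2,3)] acorr_neg[of g h t] acorr_neg[of h g t] len t
      by (auto simp: add.commute simp flip: complex_cnj_add)
  qed
  ultimately show ?thesis
    using len by (simp add: czcp_def Let_def)
qed

lemma acorr_padded:
  assumes "length u = L" "length v = L" "1 \<le> t" "t \<le> L"
  shows "acorr ([x] @ map of_int u @ [y]) ([x'] @ map of_int v @ [y']) (int t)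
     = x * of_int (v ! (t - 1)) + of_int (u ! (L - t)) * cnj y' + of_int (icorr u v t)"
proof -
  define g h where "g = [x] @ map of_int u @ [y]" and "h = [x'] @ map of_int v @ [y']"
  define F where "F k = g ! k * cnj (h ! (k + t))" for k
  have "nat (int (length g) - 1 - int t) = Suc (L - t)"
    using assms by (simp add: g_def)
  then have "acorr g h (int t) = (\<Sum>k \<in> {0 .. Suc (L - t)}. F k)"
    using assms unfolding acorr_def Let_def F_def by (simp add: g_def)
  also have "{0 .. Suc (L - t)} = {..< Suc (Suc (L - t))}"
    by auto
  also have "(\<Sum>k < Suc (Suc (L - t)). F k) = F 0 + (\<Sum>k < L - t. F (Suc k)) + F (Suc (L - t))"
    using sum.lessThan_Suc_shift[of F "L - t"] by simp
  also have "F 0 = x * of_int (v ! (t - 1))"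
    using assms by (cases t) (simp_all add: F_def g_def h_def nth_append)
  also have "F (Suc (L - t)) = of_int (u ! (L - t)) * cnj y'"
    using assms by (simp add: F_def g_def h_def nth_append)
  also have "(\<Sum>k < L - t. F (Suc k)) = of_int (icorr u v t)"
    unfolding icorr_def of_int_sum
    using assms by (intro sum.cong) (auto simp: F_def g_def h_def nth_append)
  finally show ?thesis
    by (simp add: g_def h_def algebra_simps)
qed

lemma acorr_padded_last:
  assumes "length u = L" "length v = L"
  shows "acorr ([x] @ map of_int u @ [y]) ([x'] @ map of_int v @ [y']) (int (L + 1)) = x * cnj y'"
proof -
  have "nat (int (length ([x] @ map of_int u @ [y])) - 1 - int (L + 1)) = 0"
    using assms by simp
  moreover have "nat (int (L + 1)) = L + 1"
    by simp
  ultimately show ?thesis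
    unfolding acorr_def Let_def using assms by (simp only:) (simp add: nth_append)
qed

lemma nth_append_rev:
  assumes "length b = length a" "j < 2 * length a"
  shows "(a @ rev b) ! j = (if j < length a then a ! j else b ! (2 * length a - 1 - j))"
    and "(b @ map uminus (rev a)) ! j = (if j < length a then b ! j else - a ! (2 * length a - 1 - j))"
  using assms by (auto simp: nth_append rev_nth mult_2)

lemma append_rev_boundary:
  fixes a b :: "int list"
  assumes "length b = length a" "1 \<le> t" "t \<le> 2 * length a"
  defines "N \<equiv> length a" and "e \<equiv> a @ rev b" and "f \<equiv> b @ map uminus (rev a)"
  shows "e ! (t - 1) + f ! (t - 1) - e ! (2 * N - t) + f ! (2 * N - t)
           = (if t \<le> N then 0 else 2 * (b ! (2 * N - t) - a ! (2 * N - t)))"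
    and "N < t \<Longrightarrow> f ! (t - 1) + e ! (t - 1) + e ! (2 * N - t) - f ! (2 * N - t) = 0"
  using assms by (auto simp: nth_append_rev algebra_simps)

lemma icorr_append_rev_cross:
  assumes "length b = length a" "Z \<le> length a" "2 * length a + 2 - Z \<le> t"
    and heads: "\<forall>m < Z - 1. a ! m = b ! m"
  defines "e \<equiv> a @ rev b" and "f \<equiv> b @ map uminus (rev a)"
  shows "icorr e f t + icorr f e t = 0"
proof -
  define N where "N = length a"
  have "icorr e f t + icorr f e t = (\<Sum>k < 2 * N - t. e ! k * f ! (k + t) + f ! k * e ! (k + t))"
    using assms(1) by (simp add: icorr_def sum.distrib e_def f_def N_def mult_2)
  also have "\<dots> = 0"
  proof (intro sum.neutral ballI)
    fix k assume "k \<in> {..< 2 * N - t}"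
    then have "k < N" "k < Z - 1" "\<not> k + t < N" "k + t < 2 * N" "2 * N - 1 - (k + t) < Z - 1"
      using assms(2,3) by (auto simp: N_def)
    then show "e ! k * f ! (k + t) + f ! k * e ! (k + t) = 0"
      using heads assms(1) by (simp add: e_def f_def N_def nth_append_rev)
  qed
  finally show ?thesis .
qed

lemma czcp_padded_append_rev:
  fixes a b :: "int list" and x0 y0 x1 y1 :: complex
  assumes gcp: "gcp a b" and Z: "Z \<le> length a" and heads: "\<forall>m < Z - 1. a ! m = b ! m"
    and y1: "cnj y1 = x0" and y0: "cnj y0 = - x0" and x1: "x1 = x0"
  shows "czcp ([x0] @ map of_int (a @ rev b) @ [y0]) ([x1] @ map of_int (b @ map uminus (rev a)) @ [y1])
           (2 * length a + 2) Z"
proof -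
  define N e f where "N = length a" and "e = a @ rev b" and "f = b @ map uminus (rev a)"
  define g h where "g = [x0] @ map of_int e @ [y0]" and "h = [x1] @ map of_int f @ [y1]"
  have len: "length b = N" "length e = 2 * N" "length f = 2 * N"
    using gcp by (simp_all add: gcp_def N_def e_def f_def)
  have "czcp g h (2 * N + 2) Z"
  proof (rule czcp_by_positive_lags)
    fix t assume t: "1 \<le> t" "t < 2 * N + 2" "t \<le> Z \<or> 2 * N + 2 - Z \<le> t"
    show "acorr g g (int t) + acorr h h (int t) = 0"
    proof (cases "t = 2 * N + 1")
      case True
      then show ?thesis
        using acorr_padded_last[OF len(2,2)] acorr_padded_last[OF len(3,3)] x1 y0 y1
        by (simp add: g_def h_def)
    next
      case False
      then have "t \<le> 2 * N"
        using t by simp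
      have "N < t \<Longrightarrow> 2 * N - t < Z - 1"
        using t Z \<open>t \<le> 2 * N\<close> by (auto simp: N_def)
      then have "e ! (t - 1) + f ! (t - 1) - e ! (2 * N - t) + f ! (2 * N - t) = 0"
        using append_rev_boundary(1)[OF len(1)[unfolded N_def] t(1)] \<open>t \<le> 2 * N\<close> heads
        by (simp add: N_def e_def f_def)
      moreover have "icorr e e t + icorr f f t = 0"
        using gcp_icorr[OF gcp_append_rev[OF gcp] t(1)] by (simp add: e_def f_def)
      moreover have "acorr g g (int t) + acorr h h (int t)
          = x0 * of_int (e ! (t - 1) + f ! (t - 1) - e ! (2 * N - t) + f ! (2 * N - t))
            + of_int (icorr e e t + icorr f f t)"
        using acorr_padded[OF len(2,2) t(1) \<open>t \<le> 2 * N\<close>] acorr_padded[OF len(3,3) t(1) \<open>t \<le> 2 * N\<close>]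
          x1 y0 y1 by (simp add: g_def h_def algebra_simps)
      ultimately show ?thesis
        by simp
    qed
  next
    fix t assume t: "2 * N + 2 - Z \<le> t" "t < 2 * N + 2"
    show "acorr g h (int t) + acorr h g (int t) = 0"
    proof (cases "t = 2 * N + 1")
      case True
      then show ?thesis
        using acorr_padded_last[OF len(2,3)] acorr_padded_last[OF len(3,2)] x1 y0 y1
        by (simp add: g_def h_def)
    next
      case False
      then have t': "1 \<le> t" "N < t" "t \<le> 2 * N"
        using t Z by (auto simp: N_def)
      have "f ! (t - 1) + e ! (t - 1) + e ! (2 * N - t) - f ! (2 * N - t) = 0"
        using append_rev_boundary(2)[OF len(1)[unfolded N_def] t'(1)] t' by (simp add: N_def e_def f_def)
      moreover have "icorr e f t + icorr f e t = 0"
        using icorr_append_rev_cross[OF len(1)[unfolded N_def] Z _ heads] t by (simp add: N_def e_def f_def)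
      moreover have "acorr g h (int t) + acorr h g (int t)
          = x0 * of_int (f ! (t - 1) + e ! (t - 1) + e ! (2 * N - t) - f ! (2 * N - t))
            + of_int (icorr e f t + icorr f e t)"
        using acorr_padded[OF len(2,3) t'(1,3)] acorr_padded[OF len(3,2) t'(1,3)] x1 y0 y1
        by (simp add: g_def h_def algebra_simps)
      ultimately show ?thesis
        by simp
    qed
  qed (use len Z in \<open>simp_all add: g_def h_def N_def\<close>)
  then show ?thesis
    by (simp add: g_def h_def e_def f_def N_def)
qed

theorem theorem3:
  fixes a b :: "int list" and N Z q :: nat and x0 y0 x1 y1 :: complex
  assumes kind:
    "(\<exists>k. (a, b) = turyn_iter K10 (replicate k K10) \<and> Z = 4 * N div 10 + 1) \<or>
     (\<exists>k. (a, b) = turyn_iter K26 (replicate k K26) \<and> Z = 12 * N div 26 + 1) \<or>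
     (\<exists>As. set As \<subseteq> {K10, K26} \<and> (a, b) = turyn_iter K26 As \<and> Z = 12 * N div 26 + 1)"
    and len: "N = length a"
    and q: "q \<ge> 2"
    and U: "x0 \<in> unit_roots q" "y0 \<in> unit_roots q" "x1 \<in> unit_roots q" "y1 \<in> unit_roots q"
    and c1: "x0 - cnj y1 = 0" and c2: "x1 + cnj y0 = 0" and c3: "x0 = x1"
    and c4: "cnj y0 = - cnj y1"
  shows "let c = rev b; d = map uminus (rev a); e = a @ c; f = b @ d;
             g = [x0] @ map of_int e @ [y0]; h = [x1] @ map of_int f @ [y1]
         in czcp g h (2 * N + 2) Z"
proof -
  have lengths: "length (fst K10) = 10" "length (fst K26) = 26"
    by (simp_all add: K10_def K26_def)
  have "gcp a b \<and> Z \<le> length a \<and> (\<forall>m < Z - 1. a ! m = b ! m)"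
    using kind
  proof (elim disjE exE conjE)
    fix k assume "(a, b) = turyn_iter K10 (replicate k K10)" "Z = 4 * N div 10 + 1"
    then show ?thesis
      by (intro gcp_heads_agree_turyn_iter_K10_K26[OF _ _ heads_agree_tails_oppose_K10])
        (use lengths len in auto)
  next
    fix k assume "(a, b) = turyn_iter K26 (replicate k K26)" "Z = 12 * N div 26 + 1"
    then show ?thesis
      by (intro gcp_heads_agree_turyn_iter_K10_K26[OF _ _ heads_agree_tails_oppose_K26])
        (use lengths len in auto)
  next
    fix As assume "set As \<subseteq> {K10, K26}" "(a, b) = turyn_iter K26 As" "Z = 12 * N div 26 + 1"
    then show ?thesis
      by (intro gcp_heads_agree_turyn_iter_K10_K26[OF _ _ heads_agree_tails_oppose_K26])
        (use lengths len in auto)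
  qed
  moreover have "cnj y1 = x0" "cnj y0 = - x0"
    using c1 c2 c3 by (simp_all add: eq_neg_iff_add_eq_0 add.commute)
  ultimately show ?thesis
    unfolding Let_def len using czcp_padded_append_rev c3 by metis
qed

end
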